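(* Fix an integer $J\ge 2$, a finite set $\mathcal{G}$ of group labels, and strictly decreasing positive weights $w_1>\cdots>w_J>0$. Let $(\mathbf{Y},\mathbf{G})$ be any random vector with $\mathbf{Y}=(\mathbf{Y}_1,\dots,\mathbf{Y}_J)\in\mathbb{R}^J$ integrable and $\mathbf{G}=(\mathbf{G}_1,\dots,\mathbf{G}_J)\in\mathcal{G}^J$, and suppose that for all $1\le a<b\le J$ and all $g\in\mathcal{G}^J$ with $P(\mathbf{G}=g)>0$, $$E[\mathbf{Y}_a-\mathbf{Y}_b\mid \mathbf{G}=g]\ge 0.$$ Then there exist a probability space carrying candidate features $X_1,\dots,X_J$, group statuses $G_1,\dots,G_J\in\mathcal{G}$ and integrable outcomes $Y_1,\dots,Y_J$, together with a ranking $j(\cdot)$ (a bijection of $\{1,\dots,J\}$ that is a measurable function of $\mathcal{I}=\{(X_k,G_k)\}_{k=1}^J$) such that (i) for almost every realization of $\mathcal{I}$, $j(\cdot)$ maximizes $E\left[\sum_{r=1}^J w_rY_{j(r)}\,\middle|\,\mathcal{I}\right]$ over all bijections of $\{1,\dots,J\}$, and (ii) the rank-ordered vector $\big((Y_{j(1)},\dots,Y_{j(J)}),(G_{j(1)},\dots,G_{j(J)})\big)$ has the same joint distribution as $(\mathbf{Y},\mathbf{G})$.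
   Context: Here $j(r)$ denotes the index of the candidate placed in rank $r$ (rank 1 is best). A Ranker choosing $j(\cdot)$ as in (i) is called unbiased. The statement says that the moment inequalities above are the only testable implication of unbiasedness for an Auditor who observes only rank-ordered outcomes and group statuses. *)

theory Defs
  imports "HOL-Probability.Probability" "HOL-Combinatorics.Permutations"
begin

text \<open>Candidates are indexed by 1..J. Vectors over 1..J are functions on nat.\<close>

definition group_event :: "'a measure \<Rightarrow> ('a \<Rightarrow> nat \<Rightarrow> 'g) \<Rightarrow> nat \<Rightarrow> (nat \<Rightarrow> 'g) \<Rightarrow> 'a set" where
  "group_event M G J g = {\<omega> \<in> space M. \<forall>k\<in>{1..J}. G \<omega> k = g k}"

definition cond_exp_event :: "'a measure \<Rightarrow> ('a \<Rightarrow> real) \<Rightarrow> 'a set \<Rightarrow> real" where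
  "cond_exp_event M X A = set_lebesgue_integral M A X / measure M A"

definition info_space :: "nat \<Rightarrow> (nat \<Rightarrow> real \<times> 'g) measure" where
  "info_space J = PiM {1..J} (\<lambda>_. (borel :: real measure) \<Otimes>\<^sub>M count_space (UNIV :: 'g set))"

definition info_vec :: "('a \<Rightarrow> nat \<Rightarrow> real) \<Rightarrow> ('a \<Rightarrow> nat \<Rightarrow> 'g) \<Rightarrow> nat \<Rightarrow> 'a \<Rightarrow> (nat \<Rightarrow> real \<times> 'g)" where
  "info_vec X G J \<omega> = (\<lambda>k\<in>{1..J}. (X \<omega> k, G \<omega> k))"

definition info_algebra :: "'a measure \<Rightarrow> ('a \<Rightarrow> nat \<Rightarrow> real) \<Rightarrow> ('a \<Rightarrow> nat \<Rightarrow> 'g) \<Rightarrow> nat \<Rightarrow> 'a measure" where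
  "info_algebra N X G J = vimage_algebra (space N) (info_vec X G J) (info_space J)"

text \<open>A ranking: a bijection of 1..J (j r = candidate at rank r) which is a measurable
  function of I.\<close>
definition is_ranking :: "'a measure \<Rightarrow> ('a \<Rightarrow> nat \<Rightarrow> real) \<Rightarrow> ('a \<Rightarrow> nat \<Rightarrow> 'g) \<Rightarrow> nat \<Rightarrow> ('a \<Rightarrow> nat \<Rightarrow> nat) \<Rightarrow> bool" where
  "is_ranking N X G J j \<longleftrightarrow>
     (\<forall>\<omega>\<in>space N. j \<omega> permutes {1..J}) \<and>
     (\<exists>\<phi>. \<phi> \<in> measurable (info_space J) (count_space UNIV) \<and>
          (\<forall>\<omega>\<in>space N. j \<omega> = \<phi> (info_vec X G J \<omega>)))"

definition outcome_space :: "nat \<Rightarrow> ((nat \<Rightarrow> real) \<times> (nat \<Rightarrow> 'g)) measure" where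
  "outcome_space J = PiM {1..J} (\<lambda>_. (borel :: real measure)) \<Otimes>\<^sub>M PiM {1..J} (\<lambda>_. count_space (UNIV :: 'g set))"

end

theory Submission
  imports Defs
begin

text \<open>The Ranker may ignore the features: on the original space take constant features and the
  identity ranking, so that the rank-ordered vector is (Y, G) itself. The information
  \<sigma>-algebra is then generated by the finitely many events {G = g}, and on such an event the
  conditional expected score of a ranking \<pi> is \<Sum>_r w_r E[Y_\<pi>(r) | G = g]. On events of
  positive probability the hypothesis says that k \<mapsto> E[Y_k | G = g] is decreasing, so by the
  rearrangement inequality the identity ranking is optimal almost surely.\<close>

lemma sum_mult_transpose:
  fixes w h :: "'a \<Rightarrow> 'b::ring"
  assumes "finite S" "i \<in> S" "j \<in> S" "i \<noteq> j"
  shows "(\<Sum>r\<in>S. w r * h (Transposition.transpose i j r)) = (\<Sum>r\<in>S. w r * h r) + (w i - w j) * (h j - h i)"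
proof -
  have split: "(\<Sum>r\<in>S. f r) = f i + f j + (\<Sum>r\<in>S - {i, j}. f r)" for f :: "'a \<Rightarrow> 'b"
  proof -
    have "(\<Sum>r\<in>S. f r) = (\<Sum>r\<in>S - {i, j}. f r) + (\<Sum>r\<in>{i, j}. f r)"
      using assms by (intro sum.subset_diff) auto
    then show ?thesis
      using assms(4) by (simp add: ac_simps)
  qed
  have "(\<Sum>r\<in>S - {i, j}. w r * h (Transposition.transpose i j r)) = (\<Sum>r\<in>S - {i, j}. w r * h r)"
    by (rule sum.cong) auto
  then show ?thesis
    unfolding split[of "\<lambda>r. w r * h (Transposition.transpose i j r)"] split[of "\<lambda>r. w r * h r"]
    by (simp add: algebra_simps)
qed

lemma rearrangement_inequality:
  fixes w m :: "nat \<Rightarrow> 'a::linordered_ring"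
  assumes "\<pi> permutes {1..n}" "antimono_on {1..n} w" "antimono_on {1..n} m"
  shows "(\<Sum>r\<in>{1..n}. w r * m (\<pi> r)) \<le> (\<Sum>r\<in>{1..n}. w r * m r)"
  using assms
proof (induction n arbitrary: \<pi>)
  case 0
  then show ?case by simp
next
  case (Suc n)
  define b where "b = inv \<pi> (Suc n)"
  define \<sigma> where "\<sigma> = \<pi> \<circ> Transposition.transpose b (Suc n)"
  have b: "b \<in> {1..Suc n}"
    unfolding b_def by (rule iffD2[OF permutes_in_image[OF permutes_inv[OF Suc.prems(1)]]]) simp
  have \<pi>_b: "\<pi> b = Suc n"
    unfolding b_def using Suc.prems(1) by (rule permutes_inverses(1))
  have \<sigma>_fix: "\<sigma> (Suc n) = Suc n"
    using \<pi>_b by (simp add: \<sigma>_def)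
  have "\<sigma> permutes {1..Suc n}"
    unfolding \<sigma>_def using Suc.prems(1) b by (intro permutes_compose permutes_swap_id) auto
  then have \<sigma>_perm: "\<sigma> permutes {1..n}"
    by (rule permutes_superset) (use \<sigma>_fix le_Suc_eq in auto)
  have exchange: "(\<Sum>r\<in>{1..Suc n}. w r * m (\<sigma> r))
      = (\<Sum>r\<in>{1..Suc n}. w r * m (\<pi> r)) + (w b - w (Suc n)) * (m (\<pi> (Suc n)) - m (Suc n))"
  proof (cases "b = Suc n")
    case True
    then show ?thesis by (simp add: \<sigma>_def)
  next
    case False
    then show ?thesis
      using sum_mult_transpose[of "{1..Suc n}" b "Suc n" w "m \<circ> \<pi>"] b \<pi>_b by (simp add: \<sigma>_def)
  qed
  have gain: "0 \<le> (w b - w (Suc n)) * (m (\<pi> (Suc n)) - m (Suc n))"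
  proof (rule mult_nonneg_nonneg)
    have "\<pi> (Suc n) \<in> {1..Suc n}"
      by (rule iffD2[OF permutes_in_image[OF Suc.prems(1)]]) simp
    then show "0 \<le> m (\<pi> (Suc n)) - m (Suc n)"
      using monotone_onD[OF Suc.prems(3), of "\<pi> (Suc n)" "Suc n"] by simp
    show "0 \<le> w b - w (Suc n)"
      using monotone_onD[OF Suc.prems(2), of b "Suc n"] b by simp
  qed
  have "(\<Sum>r\<in>{1..Suc n}. w r * m (\<pi> r)) \<le> (\<Sum>r\<in>{1..Suc n}. w r * m (\<sigma> r))"
    using exchange gain by simp
  also have "\<dots> = (\<Sum>r\<in>{1..n}. w r * m (\<sigma> r)) + w (Suc n) * m (Suc n)"
    using \<sigma>_fix by simp
  also have "\<dots> \<le> (\<Sum>r\<in>{1..n}. w r * m r) + w (Suc n) * m (Suc n)"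
    using Suc.prems(2,3) by (intro add_right_mono Suc.IH[OF \<sigma>_perm]) (auto elim: monotone_on_subset)
  also have "\<dots> = (\<Sum>r\<in>{1..Suc n}. w r * m r)"
    by simp
  finally show ?case .
qed

lemma cond_exp_event_diff:
  assumes "A \<in> sets M" "integrable M f" "integrable M g"
  shows "cond_exp_event M (\<lambda>x. f x - g x) A = cond_exp_event M f A - cond_exp_event M g A"
proof -
  have "set_integrable M A f" "set_integrable M A g"
    using integrable_mult_indicator[OF assms(1,2)] integrable_mult_indicator[OF assms(1,3)]
    by (simp_all add: set_integrable_def)
  then show ?thesis
    by (simp add: cond_exp_event_def set_integral_diff(2) diff_divide_distrib)
qed

lemma cond_exp_event_sum:
  assumes "finite R" "A \<in> sets M" "\<And>r. r \<in> R \<Longrightarrow> integrable M (f r)"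
  shows "cond_exp_event M (\<lambda>x. \<Sum>r\<in>R. c r * f r x) A = (\<Sum>r\<in>R. c r * cond_exp_event M (f r) A)"
proof -
  have "(LINT x:A|M. \<Sum>r\<in>R. c r * f r x) = (\<integral>x. (\<Sum>r\<in>R. c r * (indicator A x * f r x)) \<partial>M)"
    unfolding set_lebesgue_integral_def by (simp add: sum_distrib_left mult.left_commute)
  also have "\<dots> = (\<Sum>r\<in>R. c r * (LINT x:A|M. f r x))"
    unfolding set_lebesgue_integral_def using integrable_mult_indicator[OF assms(2) assms(3)]
    by (simp add: integral_sum)
  finally show ?thesis
    unfolding cond_exp_event_def by (simp add: sum_divide_distrib)
qed

lemma cond_exp_event_ranking_le:
  fixes Y :: "'a \<Rightarrow> nat \<Rightarrow> real"
  assumes A: "A \<in> sets M" and \<pi>: "\<pi> permutes {1..J}" and w: "antimono_on {1..J} w"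
    and Y: "\<And>k. k \<in> {1..J} \<Longrightarrow> integrable M (\<lambda>\<omega>. Y \<omega> k)"
    and ordered: "\<And>a b. 1 \<le> a \<Longrightarrow> a < b \<Longrightarrow> b \<le> J \<Longrightarrow> 0 \<le> cond_exp_event M (\<lambda>\<omega>. Y \<omega> a - Y \<omega> b) A"
  shows "cond_exp_event M (\<lambda>\<omega>. \<Sum>r\<in>{1..J}. w r * Y \<omega> (\<pi> r)) A
    \<le> cond_exp_event M (\<lambda>\<omega>. \<Sum>r\<in>{1..J}. w r * Y \<omega> r) A"
proof -
  define m where "m k = cond_exp_event M (\<lambda>\<omega>. Y \<omega> k) A" for k
  have "antimono_on {1..J} m"
  proof (rule monotone_onI)
    fix a b assume "a \<in> {1..J}" "b \<in> {1..J}" "a \<le> b"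
    then show "m b \<le> m a"
      using ordered[of a b] cond_exp_event_diff[OF A Y Y, of a b]
      by (cases "a = b") (auto simp: m_def)
  qed
  then have "(\<Sum>r\<in>{1..J}. w r * m (\<pi> r)) \<le> (\<Sum>r\<in>{1..J}. w r * m r)"
    by (rule rearrangement_inequality[OF \<pi> w])
  moreover have "cond_exp_event M (\<lambda>\<omega>. \<Sum>r\<in>{1..J}. w r * Y \<omega> (\<pi> r)) A = (\<Sum>r\<in>{1..J}. w r * m (\<pi> r))"
    unfolding m_def using Y permutes_in_image[OF \<pi>]
    by (intro cond_exp_event_sum[OF _ A, where f="\<lambda>r \<omega>. Y \<omega> (\<pi> r)" and c=w]) auto
  moreover have "cond_exp_event M (\<lambda>\<omega>. \<Sum>r\<in>{1..J}. w r * Y \<omega> r) A = (\<Sum>r\<in>{1..J}. w r * m r)"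
    unfolding m_def using Y by (intro cond_exp_event_sum[OF _ A, where f="\<lambda>r \<omega>. Y \<omega> r" and c=w]) auto
  ultimately show ?thesis
    by simp
qed

lemma (in finite_measure) real_cond_exp_finite_partition:
  assumes subalg: "subalgebra M F"
    and I: "finite I" and A_F: "\<And>i. i \<in> I \<Longrightarrow> A i \<in> sets F" and disj: "disjoint_family_on A I"
    and unions: "\<And>E. E \<in> sets F \<Longrightarrow> \<exists>K\<subseteq>I. E = (\<Union>i\<in>K. A i)"
    and f: "integrable M f"
  shows "AE \<omega> in M. \<forall>i\<in>I. \<omega> \<in> A i \<longrightarrow> real_cond_exp M F f \<omega> = cond_exp_event M f (A i)"
proof -
  interpret finite_measure_subalgebra M F
    by (simp add: finite_measure_subalgebra_def finite_measure_subalgebra_axioms_def subalg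
        finite_measure_axioms)
  have A_M: "A i \<in> sets M" if "i \<in> I" for i
    using A_F[OF that] subalg by (auto simp: subalgebra_def)
  define h where "h \<omega> = (\<Sum>i\<in>I. cond_exp_event M f (A i) * indicator (A i) \<omega>)" for \<omega>
  have h_atom: "h \<omega> = cond_exp_event M f (A i)" if "i \<in> I" "\<omega> \<in> A i" for i \<omega>
  proof -
    have "\<omega> \<notin> A j" if "j \<in> I - {i}" for j
      using disjoint_family_onD[OF disj, of i j] that \<open>i \<in> I\<close> \<open>\<omega> \<in> A i\<close> by auto
    then have "(\<Sum>j\<in>I - {i}. cond_exp_event M f (A j) * indicator (A j) \<omega>) = 0"
      by (intro sum.neutral) simp
    then show ?thesis
      unfolding h_def using that by (simp add: sum.remove[OF I])
  qed
  have h_F: "h \<in> borel_measurable F"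
    unfolding h_def by (auto intro!: borel_measurable_sum borel_measurable_times borel_measurable_indicator A_F)
  have h_int: "integrable M h"
    unfolding h_def
    by (auto intro!: Bochner_Integration.integrable_sum integrable_mult_right integrable_real_indicator A_M
        simp: emeasure_eq_measure)
  have on_atom: "(LINT x:A i|M. f x) = (LINT x:A i|M. h x)" if i: "i \<in> I" for i
  proof -
    have "(LINT x:A i|M. h x) = (LINT x:A i|M. cond_exp_event M f (A i))"
      using A_M[OF i] h_atom[OF i] by (intro set_lebesgue_integral_cong) auto
    also have "\<dots> = measure M (A i) * cond_exp_event M f (A i)"
      by (simp add: set_integral_const[OF A_M[OF i]] emeasure_eq_measure)
    also have "\<dots> = (LINT x:A i|M. f x)"
    proof (cases "measure M (A i) = 0")
      case True
      \<comment> \<open>then \<open>cond_exp_event M f (A i) = 0\<close>, by division by zero\<close>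
      then have "A i \<in> null_sets M"
        using A_M[OF i] by (simp add: emeasure_eq_measure null_sets_def)
      then have "(LINT x:A i|M. f x) = (LINT x:{}|M. f x)"
        using A_M[OF i] by (intro set_integral_null_delta[OF f]) auto
      then show ?thesis
        using True by (simp add: set_lebesgue_integral_def)
    qed (simp add: cond_exp_event_def)
    finally show ?thesis ..
  qed
  have "AE \<omega> in M. real_cond_exp M F f \<omega> = h \<omega>"
  proof (rule real_cond_exp_charact[OF _ f h_int h_F])
    fix E assume "E \<in> sets F"
    then obtain K where K: "K \<subseteq> I" "E = (\<Union>i\<in>K. A i)"
      using unions by blast
    have "finite K" "disjoint_family_on A K"
      using K(1) I disj finite_subset disjoint_family_on_mono by blast+
    moreover have "set_integrable M (A i) f" "set_integrable M (A i) h" if "i \<in> K" for i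
      unfolding set_integrable_def using that K(1)
      by (intro integrable_mult_indicator A_M f h_int; blast)+
    ultimately show "(LINT x:E|M. f x) = (LINT x:E|M. h x)"
      unfolding K(2) using K(1) A_M on_atom by (simp add: set_integral_finite_Union subset_iff)
  qed
  then show ?thesis
    by eventually_elim (use h_atom in auto)
qed

lemma group_event_iff:
  "\<omega> \<in> group_event M G J g \<longleftrightarrow> \<omega> \<in> space M \<and> restrict (G \<omega>) {1..J} = restrict g {1..J}"
  unfolding group_event_def by (auto simp: fun_eq_iff restrict_def)

lemma in_group_event_restrict:
  "\<omega> \<in> space M \<Longrightarrow> \<omega> \<in> group_event M G J (restrict (G \<omega>) {1..J})"
  by (simp add: group_event_iff)

lemma disjoint_family_on_group_event:
  "disjoint_family_on (group_event M G J) ({1..J} \<rightarrow>\<^sub>E UNIV)"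
  by (auto simp: disjoint_family_on_def group_event_iff PiE_restrict)

lemma info_vec_in_space: "info_vec X G J \<omega> \<in> space (info_space J)"
  by (simp add: info_vec_def info_space_def space_PiM space_pair_measure)

lemma sets_info_algebra:
  "sets (info_algebra M X G J) = {info_vec X G J -` B \<inter> space M | B. B \<in> sets (info_space J)}"
  unfolding info_algebra_def by (intro sets_vimage_algebra2 funcsetI info_vec_in_space)

lemma subalgebra_info_algebra:
  assumes "\<And>k. k \<in> {1..J} \<Longrightarrow> (\<lambda>\<omega>. X \<omega> k) \<in> borel_measurable M"
    and "\<And>k. k \<in> {1..J} \<Longrightarrow> (\<lambda>\<omega>. G \<omega> k) \<in> measurable M (count_space UNIV)"
  shows "subalgebra M (info_algebra M X G J)"
proof -
  have "info_vec X G J \<in> measurable M (info_space J)"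
    unfolding info_vec_def info_space_def by (rule measurable_restrict) (auto intro!: measurable_Pair assms)
  then have "sets (info_algebra M X G J) \<subseteq> sets M"
    by (auto simp: sets_info_algebra intro: measurable_sets)
  then show ?thesis
    by (simp add: subalgebra_def info_algebra_def)
qed

lemma group_event_in_info_algebra:
  "group_event M G J g \<in> sets (info_algebra M X G J)"
proof -
  have "(\<Pi>\<^sub>E k\<in>{1..J}. UNIV \<times> {g k}) \<in> sets (info_space J)"
    unfolding info_space_def by (intro sets_PiM_I_finite pair_measureI) auto
  moreover have "group_event M G J g = info_vec X G J -` (\<Pi>\<^sub>E k\<in>{1..J}. UNIV \<times> {g k}) \<inter> space M"
    by (auto simp: info_vec_def group_event_def Pi_iff)
  ultimately show ?thesis
    by (auto simp: sets_info_algebra)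
qed

lemma group_event_in_sets:
  assumes "\<And>k. k \<in> {1..J} \<Longrightarrow> (\<lambda>\<omega>. G \<omega> k) \<in> measurable M (count_space UNIV)"
  shows "group_event M G J g \<in> sets M"
proof -
  have "subalgebra M (info_algebra M (\<lambda>_ _. 0) G J)"
    using assms by (intro subalgebra_info_algebra) auto
  then show ?thesis
    using group_event_in_info_algebra[of M G J g "\<lambda>_ _. 0"] by (auto simp: subalgebra_def)
qed

lemma info_algebra_sets_eq_group_unions:
  assumes "E \<in> sets (info_algebra M (\<lambda>_ _. 0) G J)"
  shows "\<exists>K\<subseteq>{1..J} \<rightarrow>\<^sub>E UNIV. E = (\<Union>g\<in>K. group_event M G J g)"
proof -
  obtain B where B: "E = info_vec (\<lambda>_ _. 0) G J -` B \<inter> space M"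
    using assms by (auto simp: sets_info_algebra)
  define K where "K = {g \<in> {1..J} \<rightarrow>\<^sub>E UNIV. (\<lambda>k\<in>{1..J}. (0::real, g k)) \<in> B}"
  have "\<omega> \<in> E \<longleftrightarrow> \<omega> \<in> (\<Union>g\<in>K. group_event M G J g)" for \<omega>
  proof -
    have "(\<lambda>k\<in>{1..J}. (0::real, restrict (G \<omega>) {1..J} k)) = info_vec (\<lambda>_ _. 0) G J \<omega>"
      by (rule ext) (simp add: info_vec_def)
    then have "\<omega> \<in> E \<longleftrightarrow> \<omega> \<in> space M \<and> restrict (G \<omega>) {1..J} \<in> K"
      by (auto simp: B K_def)
    also have "\<dots> \<longleftrightarrow> \<omega> \<in> (\<Union>g\<in>K. group_event M G J g)"
    proof -
      have "\<omega> \<in> group_event M G J g \<longleftrightarrow> \<omega> \<in> space M \<and> restrict (G \<omega>) {1..J} = g" if "g \<in> K" for g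
        using that by (auto simp: group_event_iff K_def)
      then show ?thesis
        by blast
    qed
    finally show ?thesis .
  qed
  moreover have "K \<subseteq> {1..J} \<rightarrow>\<^sub>E UNIV"
    by (auto simp: K_def)
  ultimately show ?thesis
    by blast
qed

lemma (in prob_space) real_cond_exp_given_groups:
  fixes G :: "'a \<Rightarrow> nat \<Rightarrow> 'g::finite"
  assumes G: "\<And>k. k \<in> {1..J} \<Longrightarrow> (\<lambda>\<omega>. G \<omega> k) \<in> measurable M (count_space UNIV)"
    and f: "integrable M f"
  shows "AE \<omega> in M. real_cond_exp M (info_algebra M (\<lambda>_ _. 0) G J) f \<omega>
    = cond_exp_event M f (group_event M G J (restrict (G \<omega>) {1..J}))"
proof -
  have "AE \<omega> in M. \<forall>g\<in>{1..J} \<rightarrow>\<^sub>E UNIV. \<omega> \<in> group_event M G J g \<longrightarrow>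
      real_cond_exp M (info_algebra M (\<lambda>_ _. 0) G J) f \<omega> = cond_exp_event M f (group_event M G J g)"
    using G by (intro real_cond_exp_finite_partition f subalgebra_info_algebra finite_PiE
        group_event_in_info_algebra disjoint_family_on_group_event info_algebra_sets_eq_group_unions) auto
  then show ?thesis
    using AE_space
  proof eventually_elim
    case (elim \<omega>)
    have "restrict (G \<omega>) {1..J} \<in> {1..J} \<rightarrow>\<^sub>E UNIV"
      by simp
    from bspec[OF elim(1) this] in_group_event_restrict[OF elim(2)]
    show ?case
      by (rule mp)
  qed
qed

lemma (in finite_measure) AE_in_imp_measure_pos:
  assumes "A \<in> sets M"
  shows "AE \<omega> in M. \<omega> \<in> A \<longrightarrow> 0 < measure M A"
proof (cases "measure M A = 0")
  case True
  then have "A \<in> null_sets M"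
    using assms by (simp add: emeasure_eq_measure null_sets_def)
  then have "AE \<omega> in M. \<omega> \<notin> A"
    by (rule AE_not_in)
  then show ?thesis
    by eventually_elim simp
qed (simp add: order_less_le)

lemma (in finite_measure) AE_group_event_pos:
  fixes G :: "'a \<Rightarrow> nat \<Rightarrow> 'g::finite"
  assumes "\<And>k. k \<in> {1..J} \<Longrightarrow> (\<lambda>\<omega>. G \<omega> k) \<in> measurable M (count_space UNIV)"
  shows "AE \<omega> in M. 0 < measure M (group_event M G J (restrict (G \<omega>) {1..J}))"
proof -
  have "AE \<omega> in M. \<forall>g\<in>{1..J} \<rightarrow>\<^sub>E UNIV. \<omega> \<in> group_event M G J g \<longrightarrow> 0 < measure M (group_event M G J g)"
    using assms by (intro AE_finite_allI finite_PiE AE_in_imp_measure_pos group_event_in_sets) auto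
  then show ?thesis
    using AE_space
  proof eventually_elim
    case (elim \<omega>)
    have "restrict (G \<omega>) {1..J} \<in> {1..J} \<rightarrow>\<^sub>E UNIV"
      by simp
    from bspec[OF elim(1) this] in_group_event_restrict[OF elim(2)]
    show ?case
      by (rule mp)
  qed
qed

lemma (in prob_space) identity_ranking_optimal_given_groups:
  fixes Y :: "'a \<Rightarrow> nat \<Rightarrow> real" and G :: "'a \<Rightarrow> nat \<Rightarrow> 'g::finite"
  assumes w: "antimono_on {1..J} w"
    and Y: "\<And>k. k \<in> {1..J} \<Longrightarrow> integrable M (\<lambda>\<omega>. Y \<omega> k)"
    and G: "\<And>k. k \<in> {1..J} \<Longrightarrow> (\<lambda>\<omega>. G \<omega> k) \<in> measurable M (count_space UNIV)"
    and ordered: "\<And>a b g. 1 \<le> a \<Longrightarrow> a < b \<Longrightarrow> b \<le> J \<Longrightarrow> 0 < measure M (group_event M G J g) \<Longrightarrow>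
      0 \<le> cond_exp_event M (\<lambda>\<omega>. Y \<omega> a - Y \<omega> b) (group_event M G J g)"
  shows "AE \<omega> in M. \<forall>\<pi>. \<pi> permutes {1..J} \<longrightarrow>
    real_cond_exp M (info_algebra M (\<lambda>_ _. 0) G J) (\<lambda>\<omega>'. \<Sum>r\<in>{1..J}. w r * Y \<omega>' (\<pi> r)) \<omega>
    \<le> real_cond_exp M (info_algebra M (\<lambda>_ _. 0) G J) (\<lambda>\<omega>'. \<Sum>r\<in>{1..J}. w r * Y \<omega>' r) \<omega>"
proof -
  define F where "F = info_algebra M (\<lambda>_ _. 0) G J"
  define S where "S = (\<lambda>\<pi> \<omega>. \<Sum>r\<in>{1..J}. w r * Y \<omega> (\<pi> r))"
  define atom where "atom \<omega> = group_event M G J (restrict (G \<omega>) {1..J})" for \<omega>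
  have "AE \<omega> in M. \<forall>\<pi>\<in>{\<pi>. \<pi> permutes {1..J}}. real_cond_exp M F (S \<pi>) \<omega> = cond_exp_event M (S \<pi>) (atom \<omega>)"
  proof (rule AE_finite_allI)
    fix \<pi> assume "\<pi> \<in> {\<pi>. \<pi> permutes {1..J}}"
    then have \<pi>: "\<pi> permutes {1..J}"
      by simp
    have "integrable M (S \<pi>)"
      unfolding S_def
    proof (rule Bochner_Integration.integrable_sum)
      fix r assume "r \<in> {1..J}"
      then have "\<pi> r \<in> {1..J}"
        by (simp only: permutes_in_image[OF \<pi>])
      then show "integrable M (\<lambda>\<omega>. w r * Y \<omega> (\<pi> r))"
        by (intro integrable_mult_right Y)
    qed
    from real_cond_exp_given_groups[OF G this]
    show "AE \<omega> in M. real_cond_exp M F (S \<pi>) \<omega> = cond_exp_event M (S \<pi>) (atom \<omega>)"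
      unfolding F_def atom_def by simp
  qed (simp add: finite_permutations)
  moreover have "AE \<omega> in M. 0 < measure M (atom \<omega>)"
    unfolding atom_def using G by (rule AE_group_event_pos)
  ultimately show ?thesis
  proof eventually_elim
    case (elim \<omega>)
    have atom_sets: "atom \<omega> \<in> sets M"
      unfolding atom_def using G by (rule group_event_in_sets)
    show ?case
    proof (intro allI impI)
      fix \<pi> assume \<pi>: "\<pi> permutes {1..J}"
      have "cond_exp_event M (S \<pi>) (atom \<omega>) \<le> cond_exp_event M (S id) (atom \<omega>)"
        unfolding S_def id_apply
      proof (rule cond_exp_event_ranking_le[OF atom_sets \<pi> w Y])
        fix a b assume "1 \<le> a" "a < b" "b \<le> J"
        then show "0 \<le> cond_exp_event M (\<lambda>\<omega>. Y \<omega> a - Y \<omega> b) (atom \<omega>)"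
          using ordered elim(2) unfolding atom_def by blast
      qed
      moreover have "\<forall>\<sigma>\<in>{\<pi>, id}. real_cond_exp M F (S \<sigma>) \<omega> = cond_exp_event M (S \<sigma>) (atom \<omega>)"
        using elim(1) \<pi> permutes_id by blast
      ultimately have "real_cond_exp M F (S \<pi>) \<omega> \<le> real_cond_exp M F (S id) \<omega>"
        by simp
      then show "real_cond_exp M (info_algebra M (\<lambda>_ _. 0) G J) (\<lambda>\<omega>'. \<Sum>r\<in>{1..J}. w r * Y \<omega>' (\<pi> r)) \<omega>
          \<le> real_cond_exp M (info_algebra M (\<lambda>_ _. 0) G J) (\<lambda>\<omega>'. \<Sum>r\<in>{1..J}. w r * Y \<omega>' r) \<omega>"
        by (simp add: F_def S_def)
    qed
  qed
qed

theorem proposition2: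
  fixes J :: nat and w :: "nat \<Rightarrow> real"
    and M :: "'a measure" and Yv :: "'a \<Rightarrow> nat \<Rightarrow> real" and Gv :: "'a \<Rightarrow> nat \<Rightarrow> 'g::finite"
  assumes "J \<ge> 2"
    and "\<And>r s. 1 \<le> r \<Longrightarrow> r < s \<Longrightarrow> s \<le> J \<Longrightarrow> w r > w s"
    and "w J > 0"
    and "prob_space M"
    and "\<And>k. k \<in> {1..J} \<Longrightarrow> integrable M (\<lambda>\<omega>. Yv \<omega> k)"
    and "\<And>k. k \<in> {1..J} \<Longrightarrow> (\<lambda>\<omega>. Gv \<omega> k) \<in> measurable M (count_space UNIV)"
    and "\<And>a b g. 1 \<le> a \<Longrightarrow> a < b \<Longrightarrow> b \<le> J \<Longrightarrow> measure M (group_event M Gv J g) > 0 \<Longrightarrow>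
           cond_exp_event M (\<lambda>\<omega>. Yv \<omega> a - Yv \<omega> b) (group_event M Gv J g) \<ge> 0"
  shows "\<exists>(N :: 'a measure) (X :: 'a \<Rightarrow> nat \<Rightarrow> real) (G :: 'a \<Rightarrow> nat \<Rightarrow> 'g) (Y :: 'a \<Rightarrow> nat \<Rightarrow> real)
            (j :: 'a \<Rightarrow> nat \<Rightarrow> nat).
           prob_space N \<and>
           (\<forall>k\<in>{1..J}. (\<lambda>\<omega>. X \<omega> k) \<in> borel_measurable N \<and>
                       (\<lambda>\<omega>. G \<omega> k) \<in> measurable N (count_space UNIV) \<and>
                       integrable N (\<lambda>\<omega>. Y \<omega> k)) \<and>
           is_ranking N X G J j \<and>
           (AE \<omega> in N. \<forall>\<pi>. \<pi> permutes {1..J} \<longrightarrow>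
              real_cond_exp N (info_algebra N X G J) (\<lambda>\<omega>'. \<Sum>r\<in>{1..J}. w r * Y \<omega>' (\<pi> r)) \<omega>
              \<le> real_cond_exp N (info_algebra N X G J) (\<lambda>\<omega>'. \<Sum>r\<in>{1..J}. w r * Y \<omega>' (j \<omega> r)) \<omega>) \<and>
           distr N (outcome_space J) (\<lambda>\<omega>. (\<lambda>r\<in>{1..J}. Y \<omega> (j \<omega> r), \<lambda>r\<in>{1..J}. G \<omega> (j \<omega> r)))
             = distr M (outcome_space J) (\<lambda>\<omega>. (\<lambda>k\<in>{1..J}. Yv \<omega> k, \<lambda>k\<in>{1..J}. Gv \<omega> k))"
proof -
  interpret prob_space M by fact
  have "antimono_on {1..J} w"
  proof (rule monotone_onI)
    fix r s assume "r \<in> {1..J}" "s \<in> {1..J}" "r \<le> s"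
    then show "w s \<le> w r"
      using assms(2)[of r s] by (cases "r = s") auto
  qed
  from identity_ranking_optimal_given_groups[OF this assms(5-7)]
  have optimal: "AE \<omega> in M. \<forall>\<pi>. \<pi> permutes {1..J} \<longrightarrow>
      real_cond_exp M (info_algebra M (\<lambda>_ _. 0) Gv J) (\<lambda>\<omega>'. \<Sum>r\<in>{1..J}. w r * Yv \<omega>' (\<pi> r)) \<omega>
      \<le> real_cond_exp M (info_algebra M (\<lambda>_ _. 0) Gv J) (\<lambda>\<omega>'. \<Sum>r\<in>{1..J}. w r * Yv \<omega>' (id r)) \<omega>"
    unfolding id_apply .
  have "is_ranking M (\<lambda>_ _. 0) Gv J (\<lambda>_. id)"
    unfolding is_ranking_def by (auto simp: permutes_id intro!: exI[of _ "\<lambda>_. id"])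
  with optimal show ?thesis
    using assms(4-6)
    by (intro exI[of _ M] exI[of _ "\<lambda>_ _. 0"] exI[of _ Gv] exI[of _ Yv] exI[of _ "\<lambda>_. id"] conjI) simp_all
qed

end
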